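(* Let $(P,A,\lambda)$ be a marked poset and $(U_1,U_2)$ an admissible decomposition of it. Then the marked chain-order polytope $\mathcal{CO}_{U_1,U_2}(\lambda)$ is a lattice polytope, and it is normal.
   Context: A marked poset is a triple $(P,A,\lambda)$ where $(P,\prec)$ is a finite poset, $A\subseteq P$ contains all minimal and all maximal elements of $P$, and $\lambda:A\to\mathbb{Z}_{\ge 0}$, $a\mapsto\lambda_a$. A decomposition of $(P,A,\lambda)$ is a pair $(U_1,U_2)$ of disjoint sets with $U_1\cup U_2=P\setminus A$; it is admissible if there are no $u_1\in U_1$, $u_2\in U_2$ with $u_1\prec u_2$. Put $A_1=A\cup U_1$. The marked chain-order polytope $\mathcal{CO}_{U_1,U_2}(\lambda)\subset\mathbb{R}^{P\setminus A}$ is the set of $(x_p)_{p\in P\setminus A}$ such that: (i) $x_p\le\lambda_a$ whenever $p\in U_1$, $a\in A$, $p\prec a$; (ii) $\lambda_b\le x_q$ whenever $q\in U_1$, $b\in A$, $b\prec q$; (iii) $x_p\le x_q$ whenever $p,q\in U_1$, $p\prec q$; (iv) $x_p\ge0$ for $p\in U_2$; (v) for every chain $b\prec p_n\prec\cdots\prec p_1\prec a$ with $n\ge1$, $a,b\in A_1$, $p_i\in U_2$: $x_{p_1}+\cdots+x_{p_n}\le\lambda_a-\lambda_b$, where $\lambda_q$ means $x_q$ for $q\in U_1$; (vi) for every chain $p_1\prec\cdots\prec p_s\prec q$ with $q\in U_1$, $p_i\in U_2$: $x_{p_1}+\cdots+x_{p_s}\le x_q$. A lattice polytope $Q\subset\mathbb{R}^d$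 is normal if for every $n\in\mathbb{N}$ the set $nQ\cap\mathbb{Z}^d$ is the $n$-fold Minkowski sum of $Q\cap\mathbb{Z}^d$. *)

theory Defs
  imports Complex_Main
begin

text \<open>A finite poset is a finite carrier P with a strict partial order prec on it.
Points of R^(P - A) are functions 'a => real vanishing outside P - A.\<close>

definition marked_poset :: "'a set \<Rightarrow> ('a \<Rightarrow> 'a \<Rightarrow> bool) \<Rightarrow> 'a set \<Rightarrow> ('a \<Rightarrow> nat) \<Rightarrow> bool" where
  "marked_poset P prec A lam \<longleftrightarrow>
     finite P \<and>
     (\<forall>p\<in>P. \<not> prec p p) \<and>
     (\<forall>p\<in>P. \<forall>q\<in>P. \<forall>r\<in>P. prec p q \<longrightarrow> prec q r \<longrightarrow> prec p r) \<and>
     A \<subseteq> P \<and>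
     (\<forall>p\<in>P. (\<not> (\<exists>q\<in>P. prec q p)) \<longrightarrow> p \<in> A) \<and>
     (\<forall>p\<in>P. (\<not> (\<exists>q\<in>P. prec p q)) \<longrightarrow> p \<in> A)"

definition admissible_decomposition ::
  "'a set \<Rightarrow> ('a \<Rightarrow> 'a \<Rightarrow> bool) \<Rightarrow> 'a set \<Rightarrow> 'a set \<Rightarrow> 'a set \<Rightarrow> bool" where
  "admissible_decomposition P prec A U1 U2 \<longleftrightarrow>
     U1 \<inter> U2 = {} \<and> U1 \<union> U2 = P - A \<and>
     \<not> (\<exists>u1\<in>U1. \<exists>u2\<in>U2. prec u1 u2)"

text \<open>The value lambda_q, where lambda_q means x_q for q in U1.\<close>
definition lam_ext :: "'a set \<Rightarrow> ('a \<Rightarrow> nat) \<Rightarrow> ('a \<Rightarrow> real) \<Rightarrow> 'a \<Rightarrow> real" where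
  "lam_ext U1 lam x q = (if q \<in> U1 then x q else real (lam q))"

definition marked_chain_order_polytope ::
  "'a set \<Rightarrow> ('a \<Rightarrow> 'a \<Rightarrow> bool) \<Rightarrow> 'a set \<Rightarrow> ('a \<Rightarrow> nat) \<Rightarrow> 'a set \<Rightarrow> 'a set \<Rightarrow> ('a \<Rightarrow> real) set" where
  "marked_chain_order_polytope P prec A lam U1 U2 = {x.
     (\<forall>p. p \<notin> P - A \<longrightarrow> x p = 0) \<and>
     (\<forall>p\<in>U1. \<forall>a\<in>A. prec p a \<longrightarrow> x p \<le> real (lam a)) \<and>
     (\<forall>q\<in>U1. \<forall>b\<in>A. prec b q \<longrightarrow> real (lam b) \<le> x q) \<and>
     (\<forall>p\<in>U1. \<forall>q\<in>U1. prec p q \<longrightarrow> x p \<le> x q) \<and>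
     (\<forall>p\<in>U2. 0 \<le> x p) \<and>
     (\<forall>a\<in>A \<union> U1. \<forall>b\<in>A \<union> U1. \<forall>cs. cs \<noteq> [] \<and> set cs \<subseteq> U2 \<and> sorted_wrt prec (b # cs @ [a])
        \<longrightarrow> sum_list (map x cs) \<le> lam_ext U1 lam x a - lam_ext U1 lam x b) \<and>
     (\<forall>q\<in>U1. \<forall>cs. cs \<noteq> [] \<and> set cs \<subseteq> U2 \<and> sorted_wrt prec (cs @ [q])
        \<longrightarrow> sum_list (map x cs) \<le> x q)}"

definition lattice_points :: "'a set \<Rightarrow> ('a \<Rightarrow> real) set" where
  "lattice_points D = {x. (\<forall>p\<in>D. x p \<in> \<int>) \<and> (\<forall>p. p \<notin> D \<longrightarrow> x p = 0)}"

definition conv_hull_fin :: "('a \<Rightarrow> real) set \<Rightarrow> ('a \<Rightarrow> real) set" where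
  "conv_hull_fin V = {x. \<exists>c. (\<forall>v\<in>V. 0 \<le> c v) \<and> sum c V = 1 \<and> x = (\<lambda>p. \<Sum>v\<in>V. c v * v p)}"

definition lattice_polytope :: "'a set \<Rightarrow> ('a \<Rightarrow> real) set \<Rightarrow> bool" where
  "lattice_polytope D Q \<longleftrightarrow> (\<exists>V. finite V \<and> V \<subseteq> lattice_points D \<and> Q = conv_hull_fin V)"

definition dilate :: "nat \<Rightarrow> ('a \<Rightarrow> real) set \<Rightarrow> ('a \<Rightarrow> real) set" where
  "dilate n Q = (\<lambda>x. (\<lambda>p. real n * x p)) ` Q"

definition minkowski_power :: "nat \<Rightarrow> ('a \<Rightarrow> real) set \<Rightarrow> ('a \<Rightarrow> real) set" where
  "minkowski_power n S = {x. \<exists>y. (\<forall>i<n. y i \<in> S) \<and> x = (\<lambda>p. \<Sum>i<n. y i p)}"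

definition normal_polytope :: "'a set \<Rightarrow> ('a \<Rightarrow> real) set \<Rightarrow> bool" where
  "normal_polytope D Q \<longleftrightarrow> lattice_polytope D Q \<and>
     (\<forall>n::nat. n \<ge> 1 \<longrightarrow> dilate n Q \<inter> lattice_points D = minkowski_power n (Q \<inter> lattice_points D))"

end

theory Submission
  imports Defs "HOL-Library.FuncSet"
begin

text \<open>The transfer map \<open>\<phi>\<close>, given by \<open>\<phi>(X) p = X p - max {X q | q \<prec> p}\<close> on \<open>U2\<close> and by
  \<open>\<phi>(X) p = X p\<close> on \<open>U1\<close>, is a bijection from the marked order polytope onto the marked
  chain-order polytope; its inverse takes maximal weights of marked chains, and both maps preserve
  integrality. The map \<open>\<phi>\<close> is linear on every combination whose summands do not reverse the order
  of the coordinates of the combination, since all the maxima are then attained at the same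
  elements.

  A point of the order polytope is a convex combination of the two points obtained by moving all
  its non-integral coordinates up, resp. down, by the same amount, as far as possible without
  crossing an integer; both respect the order of the coordinates and have fewer non-integral
  coordinates, so by induction the chain-order polytope is the convex hull of its lattice points.
  For normality, an integral point \<open>X\<close> of the order polytope for the marking \<open>(n + 1) \<lambda>\<close> splits
  as \<open>\<lceil>X / (n + 1)\<rceil> + (X - \<lceil>X / (n + 1)\<rceil>)\<close> into integral points for \<open>\<lambda>\<close> and \<open>n \<lambda>\<close>, again
  respecting the order of the coordinates.\<close>

section \<open>Rounding and the order of coordinates\<close>

lemma add_one_minus_frac_le_Ints:
  fixes r t :: real
  assumes "t \<in> \<int>" "r \<le> t" "r \<notin> \<int>"
  shows "r + (1 - frac r) \<le> t"
proof -
  obtain k where k: "t = of_int k" using assms(1) Ints_cases by blast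
  have "r < of_int k" using assms k by (metis order_le_less Ints_of_int)
  then have "\<lfloor>r\<rfloor> < k" by (simp add: floor_less_iff)
  then show ?thesis using k unfolding frac_def by linarith
qed

lemma Ints_le_minus_frac:
  fixes r t :: real
  assumes "t \<in> \<int>" "t \<le> r"
  shows "t \<le> r - frac r"
  using assms by (auto elim!: Ints_cases simp: frac_def le_floor_iff)

lemma add_one_minus_frac_Ints: "r + (1 - frac r) \<in> \<int>"
  and minus_frac_Ints: "r - frac r \<in> \<int>"
  by (auto simp: frac_def algebra_simps)

lemma frac_extremes:
  fixes X :: "'a \<Rightarrow> real"
  assumes "finite S" "S \<noteq> {}" "\<forall>p\<in>S. X p \<notin> \<int>"
  obtains pmin pmax where "pmin \<in> S" "pmax \<in> S" "0 < frac (X pmin)" "frac (X pmax) < 1"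
    "\<forall>p\<in>S. frac (X pmin) \<le> frac (X p) \<and> frac (X p) \<le> frac (X pmax)"
proof -
  let ?F = "(\<lambda>p. frac (X p)) ` S"
  have fin: "finite ?F" "?F \<noteq> {}" using assms by auto
  obtain pmin where pmin: "pmin \<in> S" "frac (X pmin) = Min ?F" using Min_in[OF fin] by auto
  obtain pmax where pmax: "pmax \<in> S" "frac (X pmax) = Max ?F" using Max_in[OF fin] by auto
  have "0 < frac (X pmin)" using pmin assms(3) frac_ge_0[of "X pmin"] frac_eq_0_iff[of "X pmin"] by auto
  moreover have "\<forall>p\<in>S. frac (X pmin) \<le> frac (X p) \<and> frac (X p) \<le> frac (X pmax)"
    using pmin(2) pmax(2) fin(1) by simp
  ultimately show ?thesis using that pmin(1) pmax(1) frac_lt_1 by blast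
qed

definition comonotone_on :: "'a set \<Rightarrow> ('a \<Rightarrow> real) \<Rightarrow> ('a \<Rightarrow> real) \<Rightarrow> bool" where
  "comonotone_on S X Y \<longleftrightarrow> (\<forall>u\<in>S. \<forall>v\<in>S. X u \<le> X v \<longrightarrow> Y u \<le> Y v)"

lemma comonotone_on_shift_up_fractional:
  assumes "\<forall>p\<in>S. X p \<notin> \<int> \<longrightarrow> frac (X p) \<le> 1 - t" "0 \<le> t"
  shows "comonotone_on S X (\<lambda>p. if X p \<in> \<int> then X p else X p + t)"
  unfolding comonotone_on_def
proof (intro ballI impI)
  fix u v assume uv: "u \<in> S" "v \<in> S" "X u \<le> X v"
  show "(if X u \<in> \<int> then X u else X u + t) \<le> (if X v \<in> \<int> then X v else X v + t)"
  proof (cases "X u \<in> \<int>"; cases "X v \<in> \<int>")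
    assume "X u \<notin> \<int>" "X v \<in> \<int>"
    then show ?thesis using add_one_minus_frac_le_Ints[of "X v" "X u"] assms uv by auto
  qed (use uv assms in auto)
qed

lemma comonotone_on_shift_down_fractional:
  assumes "\<forall>p\<in>S. X p \<notin> \<int> \<longrightarrow> t \<le> frac (X p)" "0 \<le> t"
  shows "comonotone_on S X (\<lambda>p. if X p \<in> \<int> then X p else X p - t)"
  unfolding comonotone_on_def
proof (intro ballI impI)
  fix u v assume uv: "u \<in> S" "v \<in> S" "X u \<le> X v"
  show "(if X u \<in> \<int> then X u else X u - t) \<le> (if X v \<in> \<int> then X v else X v - t)"
  proof (cases "X u \<in> \<int>"; cases "X v \<in> \<int>")
    assume "X u \<in> \<int>" "X v \<notin> \<int>"
    then show ?thesis using Ints_le_minus_frac[of "X u" "X v"] assms uv by auto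
  qed (use uv assms in auto)
qed

lemma ceiling_divide_diff_mono:
  fixes s t :: real
  assumes "s \<in> \<int>" "t \<in> \<int>" "s \<le> t" "N \<ge> 1"
  shows "s - of_int \<lceil>s / N\<rceil> \<le> t - of_int \<lceil>t / N\<rceil>"
proof -
  obtain i j where ij: "s = of_int i" "t = of_int j" using assms by (auto elim!: Ints_cases)
  have "(t - s) / N \<le> t - s" using assms by (simp add: divide_le_eq mult_le_cancel_left1)
  then have "\<lceil>t / N\<rceil> \<le> \<lceil>s / N + of_int (j - i)\<rceil>"
    using ij by (intro ceiling_mono) (simp add: diff_divide_distrib)
  also have "\<dots> = \<lceil>s / N\<rceil> + (j - i)" by (rule ceiling_add_of_int)
  finally show ?thesis using ij by simp
qed

lemma comonotone_on_ceiling_divide: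
  fixes N :: real
  assumes "\<forall>p\<in>S. X p \<in> \<int>" "N \<ge> 1"
  shows "comonotone_on S X (\<lambda>p. of_int \<lceil>X p / N\<rceil>)"
    and "comonotone_on S X (\<lambda>p. X p - of_int \<lceil>X p / N\<rceil>)"
proof -
  show "comonotone_on S X (\<lambda>p. of_int \<lceil>X p / N\<rceil>)"
    using assms(2) unfolding comonotone_on_def by (auto intro!: ceiling_mono divide_right_mono)
  show "comonotone_on S X (\<lambda>p. X p - of_int \<lceil>X p / N\<rceil>)"
    using assms ceiling_divide_diff_mono unfolding comonotone_on_def by blast
qed

section \<open>Convex combinations and Minkowski powers\<close>

lemma sum_weighted_mono:
  fixes c f g :: "'i \<Rightarrow> real"
  assumes "\<And>i. i \<in> I \<Longrightarrow> 0 \<le> c i" "\<And>i. i \<in> I \<Longrightarrow> f i \<le> g i"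
  shows "(\<Sum>i\<in>I. c i * f i) \<le> (\<Sum>i\<in>I. c i * g i)"
  using assms by (intro sum_mono mult_left_mono) auto

lemma sum_list_map_weighted_sum:
  "sum_list (map (\<lambda>p. \<Sum>i\<in>I. c i * x i p) cs) = (\<Sum>i\<in>I. c i * sum_list (map (x i) cs :: real list))"
  by (induction cs) (simp_all add: sum.distrib distrib_left)

lemma lam_ext_weighted_sum:
  assumes "q \<notin> U1 \<Longrightarrow> real (rho q) = (\<Sum>i\<in>I. c i * real (mu i q))"
  shows "lam_ext U1 rho (\<lambda>p. \<Sum>i\<in>I. c i * x i p) q = (\<Sum>i\<in>I. c i * lam_ext U1 (mu i) (x i) q)"
  using assms by (cases "q \<in> U1") (simp_all add: lam_ext_def)

lemma finite_funs_vanishing_outside: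
  assumes "finite D" "finite T"
  shows "finite {x::'a \<Rightarrow> real. (\<forall>p\<in>D. x p \<in> T) \<and> (\<forall>p. p \<notin> D \<longrightarrow> x p = 0)}" (is "finite ?F")
proof (rule finite_imageD)
  show "inj_on (\<lambda>x. restrict x D) ?F"
    by (rule inj_onI) (simp add: fun_eq_iff restrict_def split: if_splits, metis)
  have "(\<lambda>x. restrict x D) ` ?F \<subseteq> PiE D (\<lambda>_. T)" by auto
  then show "finite ((\<lambda>x. restrict x D) ` ?F)"
    using finite_PiE[of D "\<lambda>_. T"] assms finite_subset by blast
qed

lemma conv_hull_fin_convex:
  assumes "y \<in> conv_hull_fin V" "w \<in> conv_hull_fin V" "0 \<le> a" "a \<le> 1"
  shows "(\<lambda>p. a * y p + (1 - a) * w p) \<in> conv_hull_fin V"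
proof -
  obtain c1 where c1: "\<forall>v\<in>V. 0 \<le> c1 v" "sum c1 V = 1" "y = (\<lambda>p. \<Sum>v\<in>V. c1 v * v p)"
    using assms(1) unfolding conv_hull_fin_def by blast
  obtain c2 where c2: "\<forall>v\<in>V. 0 \<le> c2 v" "sum c2 V = 1" "w = (\<lambda>p. \<Sum>v\<in>V. c2 v * v p)"
    using assms(2) unfolding conv_hull_fin_def by blast
  let ?c = "\<lambda>v. a * c1 v + (1 - a) * c2 v"
  have "\<forall>v\<in>V. 0 \<le> ?c v" using c1 c2 assms by simp
  moreover have "sum ?c V = 1" using c1 c2 by (simp add: sum.distrib sum_distrib_left[symmetric])
  moreover have "(\<lambda>p. a * y p + (1 - a) * w p) = (\<lambda>p. \<Sum>v\<in>V. ?c v * v p)"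
    using c1(3) c2(3) by (simp add: sum.distrib sum_distrib_left distrib_right mult.assoc)
  ultimately show ?thesis unfolding conv_hull_fin_def by (intro CollectI exI[of _ ?c]) blast
qed

lemma conv_hull_fin_superset:
  assumes "finite V" "v \<in> V"
  shows "v \<in> conv_hull_fin V"
proof -
  let ?c = "\<lambda>u. if u = v then 1 else (0::real)"
  have "(\<Sum>u\<in>V. ?c u * u p) = v p" for p
  proof -
    have "(\<Sum>u\<in>V. ?c u * u p) = (\<Sum>u\<in>V. if u = v then v p else 0)" by (rule sum.cong) auto
    then show ?thesis using assms by simp
  qed
  moreover have "sum ?c V = 1" using assms by simp
  ultimately show ?thesis unfolding conv_hull_fin_def by (intro CollectI exI[of _ ?c]) auto
qed

lemma minkowski_power_0: "(\<lambda>p. 0) \<in> minkowski_power 0 S"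
  unfolding minkowski_power_def by simp

lemma minkowski_power_SucI:
  assumes "y \<in> S" "w \<in> minkowski_power n S"
  shows "(\<lambda>p. y p + w p) \<in> minkowski_power (Suc n) S"
proof -
  obtain ys where ys: "\<forall>i<n. ys i \<in> S" and w: "w = (\<lambda>p. \<Sum>i<n. ys i p)"
    using assms(2) unfolding minkowski_power_def by blast
  let ?ys = "\<lambda>i. if i < n then ys i else y"
  have "(\<Sum>i<n. ?ys i p) = w p" for p
    unfolding w by (rule sum.cong) auto
  then have "(\<lambda>p. y p + w p) = (\<lambda>p. \<Sum>i<Suc n. ?ys i p)"
    by (simp add: fun_eq_iff)
  moreover have "\<forall>i<Suc n. ?ys i \<in> S" using ys assms(1) by simp
  ultimately show ?thesis unfolding minkowski_power_def by (intro CollectI exI[of _ ?ys]) blast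
qed

section \<open>Posets with an admissible decomposition\<close>

locale admissible_marked_poset =
  fixes P :: "'a set" and prec :: "'a \<Rightarrow> 'a \<Rightarrow> bool" and A U1 U2 :: "'a set"
  assumes finite_P: "finite P"
    and prec_irrefl: "p \<in> P \<Longrightarrow> \<not> prec p p"
    and prec_trans: "p \<in> P \<Longrightarrow> q \<in> P \<Longrightarrow> r \<in> P \<Longrightarrow> prec p q \<Longrightarrow> prec q r \<Longrightarrow> prec p r"
    and marked_subset: "A \<subseteq> P"
    and minimal_marked: "p \<in> P \<Longrightarrow> \<not> (\<exists>q\<in>P. prec q p) \<Longrightarrow> p \<in> A"
    and maximal_marked: "p \<in> P \<Longrightarrow> \<not> (\<exists>q\<in>P. prec p q) \<Longrightarrow> p \<in> A"
    and U_disjoint: "U1 \<inter> U2 = {}"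
    and U_union: "U1 \<union> U2 = P - A"
    and admissible: "u1 \<in> U1 \<Longrightarrow> u2 \<in> U2 \<Longrightarrow> \<not> prec u1 u2"

lemma admissible_marked_posetI:
  assumes "marked_poset P prec A lam" "admissible_decomposition P prec A U1 U2"
  shows "admissible_marked_poset P prec A U1 U2"
  using assms unfolding marked_poset_def admissible_decomposition_def
  by unfold_locales blast+

context admissible_marked_poset
begin

lemma U1_subset: "U1 \<subseteq> P - A" and U2_subset: "U2 \<subseteq> P - A"
  using U_union by auto

definition prec_rel :: "('a \<times> 'a) set" where
  "prec_rel = {(q, p). q \<in> P \<and> p \<in> P \<and> prec q p}"

lemma acyclic_prec_rel: "acyclic prec_rel"
proof -
  have "trans prec_rel" unfolding prec_rel_def trans_def using prec_trans by blast
  then show ?thesis unfolding acyclic_def using prec_irrefl by (auto simp: trancl_id prec_rel_def)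
qed

lemma finite_prec_rel: "finite prec_rel"
  by (rule finite_subset[of _ "P \<times> P"]) (auto simp: prec_rel_def finite_P)

lemma marked_below_or_eq: "p \<in> P \<Longrightarrow> \<exists>b\<in>A. b = p \<or> prec b p"
proof (induction p rule: wf_induct[OF finite_acyclic_wf[OF finite_prec_rel acyclic_prec_rel]])
  case (1 p)
  show ?case
  proof (cases "p \<in> A")
    case False
    then obtain q where q: "q \<in> P" "prec q p" using minimal_marked 1(2) by blast
    then have "(q, p) \<in> prec_rel" using 1(2) by (simp add: prec_rel_def)
    then obtain b where "b \<in> A" "b = q \<or> prec b q" using 1(1) q(1) by blast
    then show ?thesis using q prec_trans[of b q p] 1(2) marked_subset by blast
  qed auto
qed

lemma marked_above_or_eq: "p \<in> P \<Longrightarrow> \<exists>a\<in>A. a = p \<or> prec p a"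
proof (induction p rule: wf_induct[OF finite_acyclic_wf[OF
      iffD2[OF finite_converse finite_prec_rel] iffD2[OF acyclic_converse acyclic_prec_rel]]])
  case (1 p)
  show ?case
  proof (cases "p \<in> A")
    case False
    then obtain q where q: "q \<in> P" "prec p q" using maximal_marked 1(2) by blast
    then have "(q, p) \<in> prec_rel\<inverse>" using 1(2) by (simp add: prec_rel_def)
    then obtain a where "a \<in> A" "a = q \<or> prec q a" using 1(1) q(1) by blast
    then show ?thesis using q prec_trans[of p q a] 1(2) marked_subset by blast
  qed auto
qed

lemma marked_below: "p \<in> P - A \<Longrightarrow> \<exists>b\<in>A. prec b p"
  using marked_below_or_eq by blast

lemma marked_above: "p \<in> P - A \<Longrightarrow> \<exists>a\<in>A. prec p a"
  using marked_above_or_eq by blast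

lemma sorted_wrt_prec_snoc:
  assumes "sorted_wrt prec xs" "set xs \<subseteq> P" "xs \<noteq> []" "p \<in> P" "prec (last xs) p"
  shows "sorted_wrt prec (xs @ [p])"
proof -
  obtain ys where xs: "xs = ys @ [last xs]" using assms(3) by (metis append_butlast_last_id)
  then have "sorted_wrt prec (ys @ [last xs])" using assms(1) by simp
  then have below_last: "prec y (last xs)" if "y \<in> set ys" for y
    using that by (simp add: sorted_wrt_append)
  have "prec x p" if x: "x \<in> set xs" for x
  proof (cases "x = last xs")
    case False
    then have "x \<in> set ys" using x by (subst (asm) xs) auto
    moreover have "x \<in> P" "last xs \<in> P" using x assms(2,3) by auto
    ultimately show ?thesis using below_last assms(4,5) prec_trans[of x "last xs" p] by blast
  qed (use assms(5) in simp)
  then show ?thesis using assms(1) by (simp add: sorted_wrt_append)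
qed

lemma sorted_wrt_prec_Cons:
  assumes "sorted_wrt prec xs" "set xs \<subseteq> P" "xs \<noteq> []" "b \<in> P" "prec b (hd xs)"
  shows "sorted_wrt prec (b # xs)"
proof -
  obtain y ys where xs: "xs = y # ys" using assms(3) by (cases xs) auto
  have "prec b z" if "z \<in> set ys" for z
    using that assms xs prec_trans[of b y z] by auto
  then show ?thesis using assms(1,5) xs by simp
qed

lemma sorted_wrt_prec_distinct: "sorted_wrt prec xs \<Longrightarrow> set xs \<subseteq> P \<Longrightarrow> distinct xs"
  by (induction xs) (auto dest: prec_irrefl)

section \<open>The marked chain-order polytope\<close>

abbreviation CO :: "('a \<Rightarrow> nat) \<Rightarrow> ('a \<Rightarrow> real) set" where
  "CO mu \<equiv> marked_chain_order_polytope P prec A mu U1 U2"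

lemma
  assumes "z \<in> CO mu"
  shows CO_vanishes: "p \<notin> P - A \<Longrightarrow> z p = 0"
    and CO_le_marked: "p \<in> U1 \<Longrightarrow> a \<in> A \<Longrightarrow> prec p a \<Longrightarrow> z p \<le> real (mu a)"
    and CO_marked_le: "q \<in> U1 \<Longrightarrow> b \<in> A \<Longrightarrow> prec b q \<Longrightarrow> real (mu b) \<le> z q"
    and CO_mono_U1: "p \<in> U1 \<Longrightarrow> q \<in> U1 \<Longrightarrow> prec p q \<Longrightarrow> z p \<le> z q"
    and CO_nonneg_U2: "p \<in> U2 \<Longrightarrow> 0 \<le> z p"
    and CO_chain_between: "a \<in> A \<union> U1 \<Longrightarrow> b \<in> A \<union> U1 \<Longrightarrow> cs \<noteq> [] \<Longrightarrow> set cs \<subseteq> U2 \<Longrightarrow>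
      sorted_wrt prec (b # cs @ [a]) \<Longrightarrow> sum_list (map z cs) \<le> lam_ext U1 mu z a - lam_ext U1 mu z b"
    and CO_chain_below_U1: "q \<in> U1 \<Longrightarrow> cs \<noteq> [] \<Longrightarrow> set cs \<subseteq> U2 \<Longrightarrow>
      sorted_wrt prec (cs @ [q]) \<Longrightarrow> sum_list (map z cs) \<le> z q"
  using assms unfolding marked_chain_order_polytope_def mem_Collect_eq by metis+

lemma CO_nonneg_combination:
  assumes c: "\<And>i. i \<in> I \<Longrightarrow> 0 \<le> c i" and x: "\<And>i. i \<in> I \<Longrightarrow> x i \<in> CO (mu i)"
    and rho: "\<And>a. a \<in> A \<Longrightarrow> real (rho a) = (\<Sum>i\<in>I. c i * real (mu i a))"
  shows "(\<lambda>p. \<Sum>i\<in>I. c i * x i p) \<in> CO rho"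
proof -
  define z where "z = (\<lambda>p. \<Sum>i\<in>I. c i * x i p)"
  note mono = sum_weighted_mono[OF c]
  have lam_ext_z: "lam_ext U1 rho z q = (\<Sum>i\<in>I. c i * lam_ext U1 (mu i) (x i) q)"
    if "q \<in> A \<union> U1" for q
    unfolding z_def using that rho by (intro lam_ext_weighted_sum) blast
  note sum_list_z = sum_list_map_weighted_sum[of c x I, folded z_def]
  have "z \<in> CO rho" unfolding marked_chain_order_polytope_def
  proof (intro CollectI conjI allI impI ballI)
    fix p assume "p \<notin> P - A" then show "z p = 0" using CO_vanishes[OF x] by (simp add: z_def)
  next
    fix p a assume "p \<in> U1" "a \<in> A" "prec p a"
    then show "z p \<le> real (rho a)" unfolding z_def rho[OF \<open>a \<in> A\<close>]
      by (intro mono CO_le_marked[OF x])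
  next
    fix q b assume "q \<in> U1" "b \<in> A" "prec b q"
    then show "real (rho b) \<le> z q" unfolding z_def rho[OF \<open>b \<in> A\<close>]
      by (intro mono CO_marked_le[OF x])
  next
    fix p q assume "p \<in> U1" "q \<in> U1" "prec p q"
    then show "z p \<le> z q" unfolding z_def by (intro mono CO_mono_U1[OF x])
  next
    fix p assume "p \<in> U2"
    then have "(\<Sum>i\<in>I. c i * 0) \<le> z p" unfolding z_def by (intro mono CO_nonneg_U2[OF x])
    then show "0 \<le> z p" by simp
  next
    fix a b cs assume ab: "a \<in> A \<union> U1" "b \<in> A \<union> U1"
      and cs: "cs \<noteq> [] \<and> set cs \<subseteq> U2 \<and> sorted_wrt prec (b # cs @ [a])"
    have "(\<Sum>i\<in>I. c i * sum_list (map (x i) cs))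
        \<le> (\<Sum>i\<in>I. c i * (lam_ext U1 (mu i) (x i) a - lam_ext U1 (mu i) (x i) b))"
      using cs by (intro mono CO_chain_between[OF x ab]) auto
    then show "sum_list (map z cs) \<le> lam_ext U1 rho z a - lam_ext U1 rho z b"
      unfolding sum_list_z lam_ext_z[OF ab(1)] lam_ext_z[OF ab(2)]
      by (simp add: right_diff_distrib sum_subtractf)
  next
    fix q cs assume q: "q \<in> U1" and cs: "cs \<noteq> [] \<and> set cs \<subseteq> U2 \<and> sorted_wrt prec (cs @ [q])"
    have "sum_list (map z cs) \<le> (\<Sum>i\<in>I. c i * x i q)"
      unfolding sum_list_z using cs by (intro mono CO_chain_below_U1[OF x q]) auto
    then show "sum_list (map z cs) \<le> z q" unfolding z_def .
  qed
  then show ?thesis unfolding z_def .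
qed

lemma CO_scale:
  assumes "x \<in> CO mu" "0 \<le> c" "\<And>a. a \<in> A \<Longrightarrow> real (rho a) = c * real (mu a)"
  shows "(\<lambda>p. c * x p) \<in> CO rho"
  using CO_nonneg_combination[of "{()}" "\<lambda>_. c" "\<lambda>_. x" "\<lambda>_. mu" rho] assms by simp

lemma CO_coordinate_bounds:
  assumes z: "z \<in> CO mu" and p: "p \<in> P - A"
  shows "0 \<le> z p \<and> z p \<le> real (\<Sum>a\<in>A. mu a)"
proof -
  have "mu a \<le> (\<Sum>a\<in>A. mu a)" if "a \<in> A" for a
    using that finite_subset[OF marked_subset finite_P] by (intro member_le_sum) auto
  then have mu_le: "real (mu a) \<le> real (\<Sum>a\<in>A. mu a)" if "a \<in> A" for a
    using that of_nat_le_iff by blast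
  obtain a where a: "a \<in> A" "prec p a" using marked_above p by blast
  obtain b where b: "b \<in> A" "prec b p" using marked_below p by blast
  show ?thesis
  proof (cases "p \<in> U1")
    case True
    then show ?thesis using CO_le_marked[OF z True a] CO_marked_le[OF z True b] mu_le[OF a(1)] by simp
  next
    case False
    then have pU2: "p \<in> U2" using p U_union by auto
    have "prec b a" using prec_trans[of b p a] a b p marked_subset by auto
    then have "z p \<le> lam_ext U1 mu z a - lam_ext U1 mu z b"
      using CO_chain_between[OF z, of a b "[p]"] a b pU2 by auto
    moreover have "lam_ext U1 mu z a = real (mu a)" "lam_ext U1 mu z b = real (mu b)"
      using a b U1_subset unfolding lam_ext_def by auto
    ultimately show ?thesis using CO_nonneg_U2[OF z pU2] mu_le[OF a(1)] by simp
  qed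
qed

lemma finite_CO_lattice_points: "finite (CO mu \<inter> lattice_points (P - A))"
proof -
  define M where "M = int (\<Sum>a\<in>A. mu a)"
  have "CO mu \<inter> lattice_points (P - A)
      \<subseteq> {x. (\<forall>p\<in>P - A. x p \<in> real_of_int ` {0..M}) \<and> (\<forall>p. p \<notin> P - A \<longrightarrow> x p = 0)}"
  proof (intro subsetI CollectI conjI allI impI ballI)
    fix x p assume x: "x \<in> CO mu \<inter> lattice_points (P - A)" and p: "p \<in> P - A"
    obtain k where k: "x p = of_int k" using x p unfolding lattice_points_def by (auto elim!: Ints_cases)
    have "0 \<le> x p \<and> x p \<le> real (\<Sum>a\<in>A. mu a)" using CO_coordinate_bounds[OF _ p] x by blast
    then have "0 \<le> k \<and> k \<le> M" unfolding k M_def by linarith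
    then show "x p \<in> real_of_int ` {0..M}" using k by auto
  qed (auto simp: lattice_points_def)
  moreover have "finite {x. (\<forall>p\<in>P - A. x p \<in> real_of_int ` {0..M}) \<and> (\<forall>p. p \<notin> P - A \<longrightarrow> x p = 0)}"
    using finite_P by (intro finite_funs_vanishing_outside) auto
  ultimately show ?thesis by (rule finite_subset)
qed

lemma CO_zero:
  assumes "z \<in> CO (\<lambda>_. 0)"
  shows "z = (\<lambda>_. 0)"
proof
  fix p
  show "z p = 0"
    using CO_coordinate_bounds[OF assms, of p] CO_vanishes[OF assms, of p] by (cases "p \<in> P - A") auto
qed

section \<open>The transfer map\<close>

definition strict_below :: "'a \<Rightarrow> 'a set" where
  "strict_below p = {q \<in> P. prec q p}"

lemma finite_strict_below: "finite (strict_below p)"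
  unfolding strict_below_def using finite_P by simp

lemma strict_below_nonempty: "p \<in> P - A \<Longrightarrow> strict_below p \<noteq> {}"
  unfolding strict_below_def using marked_below marked_subset by blast

lemma strict_below_U2: "p \<in> U2 \<Longrightarrow> q \<in> strict_below p \<Longrightarrow> q \<in> A \<or> q \<in> U2"
  unfolding strict_below_def using admissible U_union by blast

text \<open>Points of the marked order polytope, extended by the marking on \<open>A\<close>. Relations between two
  marked elements are left out: they only constrain the marking.\<close>

definition order_polytope :: "('a \<Rightarrow> nat) \<Rightarrow> ('a \<Rightarrow> real) set" where
  "order_polytope mu = {X. (\<forall>a\<in>A. X a = real (mu a)) \<and>
     (\<forall>p\<in>P. \<forall>q\<in>P. prec p q \<longrightarrow> \<not> (p \<in> A \<and> q \<in> A) \<longrightarrow> X p \<le> X q)}"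

lemma order_polytopeD:
  assumes "X \<in> order_polytope mu"
  shows order_polytope_marked: "a \<in> A \<Longrightarrow> X a = real (mu a)"
    and order_polytope_mono: "p \<in> P \<Longrightarrow> q \<in> P \<Longrightarrow> prec p q \<Longrightarrow> \<not> (p \<in> A \<and> q \<in> A) \<Longrightarrow> X p \<le> X q"
  using assms unfolding order_polytope_def by blast+

definition order_to_chain :: "('a \<Rightarrow> real) \<Rightarrow> 'a \<Rightarrow> real" where
  "order_to_chain X p =
     (if p \<in> U2 then X p - Max (X ` strict_below p) else if p \<in> U1 then X p else 0)"

lemma order_to_chain_U1: "p \<in> U1 \<Longrightarrow> order_to_chain X p = X p"
  using U_disjoint unfolding order_to_chain_def by auto

lemma order_to_chain_le: "c \<in> U2 \<Longrightarrow> q \<in> strict_below c \<Longrightarrow> order_to_chain X c \<le> X c - X q"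
  using finite_strict_below unfolding order_to_chain_def by simp

lemma order_to_chain_chain_sum:
  "b \<in> P \<Longrightarrow> cs \<noteq> [] \<Longrightarrow> set cs \<subseteq> U2 \<Longrightarrow> sorted_wrt prec (b # cs) \<Longrightarrow>
    sum_list (map (order_to_chain X) cs) \<le> X (last cs) - X b"
proof (induction cs arbitrary: b)
  case (Cons c cs)
  have c: "c \<in> U2" "c \<in> P" "b \<in> strict_below c"
    using Cons.prems U2_subset unfolding strict_below_def by auto
  show ?case
  proof (cases "cs = []")
    case False
    then have "sum_list (map (order_to_chain X) cs) \<le> X (last cs) - X c"
      using Cons.IH[OF c(2) False] Cons.prems by auto
    then show ?thesis using order_to_chain_le[OF c(1,3), of X] False by simp
  qed (use order_to_chain_le[OF c(1,3), of X] in simp)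
qed simp

lemma order_to_chain_chain_sum_le:
  assumes X: "X \<in> order_polytope mu" and b: "b \<in> P" and a: "a \<in> A \<union> U1"
    and cs: "cs \<noteq> []" "set cs \<subseteq> U2" "sorted_wrt prec (b # cs @ [a])"
  shows "sum_list (map (order_to_chain X) cs) \<le> X a - X b"
proof -
  have "sum_list (map (order_to_chain X) cs) \<le> X (last cs) - X b"
    using b cs by (intro order_to_chain_chain_sum) (auto simp: sorted_wrt_append)
  moreover have "X (last cs) \<le> X a"
  proof (rule order_polytope_mono[OF X])
    show "prec (last cs) a" using cs by (auto simp: sorted_wrt_append)
    show "last cs \<in> P" "\<not> (last cs \<in> A \<and> a \<in> A)" using cs U2_subset last_in_set by blast+
    show "a \<in> P" using a marked_subset U1_subset by blast
  qed
  ultimately show ?thesis by simp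
qed

lemma order_to_chain_in_CO:
  assumes X: "X \<in> order_polytope mu"
  shows "order_to_chain X \<in> CO mu"
proof -
  note mono = order_polytope_mono[OF X] and marked = order_polytope_marked[OF X]
  have lam_ext_X: "lam_ext U1 mu (order_to_chain X) a = X a" if "a \<in> A \<union> U1" for a
    using that marked order_to_chain_U1 unfolding lam_ext_def by auto
  show ?thesis unfolding marked_chain_order_polytope_def
  proof (intro CollectI conjI allI impI ballI)
    fix p assume "p \<notin> P - A" then show "order_to_chain X p = 0"
      unfolding order_to_chain_def using U_union by auto
  next
    fix p a assume "p \<in> U1" "a \<in> A" "prec p a"
    moreover have "p \<in> P - A" "a \<in> P" using calculation U1_subset marked_subset by auto
    ultimately show "order_to_chain X p \<le> real (mu a)"
      using mono[of p a] marked order_to_chain_U1 by auto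
  next
    fix q b assume "q \<in> U1" "b \<in> A" "prec b q"
    moreover have "q \<in> P - A" "b \<in> P" using calculation U1_subset marked_subset by auto
    ultimately show "real (mu b) \<le> order_to_chain X q"
      using mono[of b q] marked order_to_chain_U1 by auto
  next
    fix p q assume "p \<in> U1" "q \<in> U1" "prec p q"
    moreover have "p \<in> P - A" "q \<in> P - A" using calculation U1_subset by auto
    ultimately show "order_to_chain X p \<le> order_to_chain X q"
      using mono[of p q] order_to_chain_U1 by auto
  next
    fix p assume p: "p \<in> U2"
    then have "\<forall>x\<in>X ` strict_below p. x \<le> X p"
      using mono U2_subset unfolding strict_below_def by auto
    then show "0 \<le> order_to_chain X p"
      using p finite_strict_below strict_below_nonempty[of p] U2_subset
      unfolding order_to_chain_def by auto
  next
    fix a b cs assume "a \<in> A \<union> U1" "b \<in> A \<union> U1"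
      and "cs \<noteq> [] \<and> set cs \<subseteq> U2 \<and> sorted_wrt prec (b # cs @ [a])"
    moreover have "b \<in> P" using calculation marked_subset U1_subset by auto
    ultimately show "sum_list (map (order_to_chain X) cs)
        \<le> lam_ext U1 mu (order_to_chain X) a - lam_ext U1 mu (order_to_chain X) b"
      using order_to_chain_chain_sum_le[OF X] lam_ext_X by simp
  next
    fix q cs assume q: "q \<in> U1" and cs: "cs \<noteq> [] \<and> set cs \<subseteq> U2 \<and> sorted_wrt prec (cs @ [q])"
    then have hd: "hd cs \<in> P - A" using U2_subset by (auto intro: hd_in_set)
    obtain b where b: "b \<in> A" "prec b (hd cs)" using marked_below[OF hd] by blast
    have "sorted_wrt prec (b # cs @ [q])"
      using cs q b U1_subset U2_subset marked_subset by (intro sorted_wrt_prec_Cons) auto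
    then have "sum_list (map (order_to_chain X) cs) \<le> X q - X b"
      using q b cs marked_subset by (intro order_to_chain_chain_sum_le[OF X]) auto
    then show "sum_list (map (order_to_chain X) cs) \<le> order_to_chain X q"
      using marked[OF b(1)] order_to_chain_U1[OF q] by simp
  qed
qed

lemma order_to_chain_lattice_point:
  assumes "\<forall>q\<in>P. X q \<in> \<int>"
  shows "order_to_chain X \<in> lattice_points (P - A)"
proof -
  have "Max (X ` strict_below p) \<in> \<int>" if "p \<in> U2" for p
  proof -
    have "Max (X ` strict_below p) \<in> X ` strict_below p"
      using that finite_strict_below strict_below_nonempty[of p] U2_subset by (intro Max_in) auto
    then show ?thesis using assms unfolding strict_below_def by auto
  qed
  then show ?thesis using assms U1_subset U2_subset U_union
    unfolding lattice_points_def order_to_chain_def by auto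
qed

lemma order_to_chain_combination:
  assumes lin: "\<forall>q\<in>P. X q = a * Y q + b * W q"
    and Y: "comonotone_on P X Y" and W: "comonotone_on P X W"
  shows "order_to_chain X = (\<lambda>p. a * order_to_chain Y p + b * order_to_chain W p)"
proof
  fix p
  show "order_to_chain X p = a * order_to_chain Y p + b * order_to_chain W p"
  proof (cases "p \<in> U2")
    case True
    have p: "p \<in> P - A" using True U2_subset by auto
    have fin: "finite (X ` strict_below p)" "X ` strict_below p \<noteq> {}"
      using finite_strict_below strict_below_nonempty[OF p] by auto
    obtain q where q: "q \<in> strict_below p" "X q = Max (X ` strict_below p)"
      using Max_in[OF fin] by auto
    have below_P: "strict_below p \<subseteq> P" unfolding strict_below_def by auto
    have "Y r \<le> Y q \<and> W r \<le> W q" if r: "r \<in> strict_below p" for r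
    proof -
      have "X r \<le> X q" using r q(2) fin(1) by simp
      moreover have "r \<in> P" "q \<in> P" using r q(1) below_P by auto
      ultimately show ?thesis using Y W unfolding comonotone_on_def by blast
    qed
    then have "Max (Y ` strict_below p) = Y q" "Max (W ` strict_below p) = W q"
      using q(1) finite_strict_below by (auto intro!: Max_eqI)
    moreover have "X p = a * Y p + b * W p" "X q = a * Y q + b * W q" using lin p q below_P by auto
    ultimately show ?thesis using True q unfolding order_to_chain_def by (simp add: algebra_simps)
  next
    case False
    then show ?thesis using lin U1_subset unfolding order_to_chain_def by auto
  qed
qed

lemma comonotone_on_order_polytope:
  assumes "X \<in> order_polytope mu" "comonotone_on P X Y" "\<forall>a\<in>A. Y a = real (nu a)"
  shows "Y \<in> order_polytope nu"
  unfolding order_polytope_def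
proof (intro CollectI conjI ballI impI)
  fix p q assume "p \<in> P" "q \<in> P" "prec p q" "\<not> (p \<in> A \<and> q \<in> A)"
  then show "Y p \<le> Y q"
    using order_polytope_mono[OF assms(1)] assms(2) unfolding comonotone_on_def by blast
qed (use assms(3) in blast)

definition marked_chains :: "'a \<Rightarrow> ('a \<times> 'a list) set" where
  "marked_chains p =
     {(b, cs). b \<in> A \<and> cs \<noteq> [] \<and> set cs \<subseteq> U2 \<and> sorted_wrt prec (b # cs) \<and> last cs = p}"

definition chain_value :: "('a \<Rightarrow> nat) \<Rightarrow> ('a \<Rightarrow> real) \<Rightarrow> 'a \<times> 'a list \<Rightarrow> real" where
  "chain_value mu z bc = real (mu (fst bc)) + sum_list (map z (snd bc))"

lemma finite_marked_chains: "finite (marked_chains p)"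
proof -
  have "marked_chains p \<subseteq> A \<times> {cs. set cs \<subseteq> U2 \<and> length cs \<le> card U2}"
  proof (safe)
    fix b cs assume "(b, cs) \<in> marked_chains p"
    then have bcs: "b \<in> A" "set cs \<subseteq> U2" "sorted_wrt prec (b # cs)"
      unfolding marked_chains_def by auto
    then have "distinct cs" using sorted_wrt_prec_distinct[of cs] U2_subset by auto
    then show "length cs \<le> card U2"
      using bcs(2) finite_subset[OF U2_subset] finite_P by (metis card_mono distinct_card finite_Diff)
  qed (auto simp: marked_chains_def)
  moreover have "finite (A \<times> {cs. set cs \<subseteq> U2 \<and> length cs \<le> card U2})"
    using finite_P marked_subset U2_subset
    by (intro finite_cartesian_product finite_lists_length_le) (auto intro: finite_subset)
  ultimately show ?thesis by (rule finite_subset)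
qed

lemma singleton_marked_chain: "b \<in> A \<Longrightarrow> p \<in> U2 \<Longrightarrow> prec b p \<Longrightarrow> (b, [p]) \<in> marked_chains p"
  unfolding marked_chains_def by auto

lemma marked_chains_nonempty: "p \<in> U2 \<Longrightarrow> marked_chains p \<noteq> {}"
  using marked_below[of p] U2_subset singleton_marked_chain by blast

lemma marked_chains_U2: "bc \<in> marked_chains p \<Longrightarrow> p \<in> U2"
  unfolding marked_chains_def by (auto intro: last_in_set)

lemma marked_chains_snoc:
  assumes "(b, cs) \<in> marked_chains q" "p \<in> U2" "prec q p"
  shows "(b, cs @ [p]) \<in> marked_chains p"
proof -
  have "sorted_wrt prec ((b # cs) @ [p])"
    using assms marked_subset U2_subset
    by (intro sorted_wrt_prec_snoc) (auto simp: marked_chains_def)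
  then show ?thesis using assms unfolding marked_chains_def by auto
qed

lemma marked_chains_butlast:
  assumes "(b, cs @ [p]) \<in> marked_chains p" "cs \<noteq> []"
  shows "(b, cs) \<in> marked_chains (last cs)" "prec (last cs) p"
  using assms unfolding marked_chains_def by (auto simp: sorted_wrt_append)

text \<open>The inverse of the transfer map: on \<open>U2\<close> the recursion \<open>X p = z p + max {X q | q \<prec> p}\<close>
  is unrolled along chains.\<close>

definition chain_to_order :: "('a \<Rightarrow> nat) \<Rightarrow> ('a \<Rightarrow> real) \<Rightarrow> 'a \<Rightarrow> real" where
  "chain_to_order mu z p =
     (if p \<in> A then real (mu p)
      else if p \<in> U2 then Max (chain_value mu z ` marked_chains p) else z p)"

lemma chain_to_order_marked_or_U1:
  "q \<in> A \<union> U1 \<Longrightarrow> chain_to_order mu z q = lam_ext U1 mu z q"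
  using U1_subset U_disjoint unfolding chain_to_order_def lam_ext_def by auto

lemma chain_value_le_chain_to_order:
  "bc \<in> marked_chains p \<Longrightarrow> chain_value mu z bc \<le> chain_to_order mu z p"
  using marked_chains_U2[of bc p] U2_subset finite_marked_chains
  unfolding chain_to_order_def by auto

lemma chain_to_order_attained:
  assumes "p \<in> U2"
  obtains b cs where "(b, cs) \<in> marked_chains p" "chain_to_order mu z p = chain_value mu z (b, cs)"
proof -
  have "Max (chain_value mu z ` marked_chains p) \<in> chain_value mu z ` marked_chains p"
    using finite_marked_chains marked_chains_nonempty[OF assms] by (intro Max_in) auto
  then show ?thesis using that assms U2_subset unfolding chain_to_order_def by auto
qed

lemma chain_to_order_U2_le:
  assumes p: "p \<in> U2"
  shows "chain_to_order mu z p \<le> z p + Max (chain_to_order mu z ` strict_below p)"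
proof -
  let ?M = "Max (chain_to_order mu z ` strict_below p)"
  have below_le: "chain_to_order mu z q \<le> ?M" if "q \<in> strict_below p" for q
    using that finite_strict_below by simp
  obtain b cs where bcs: "(b, cs) \<in> marked_chains p" "chain_to_order mu z p = chain_value mu z (b, cs)"
    using chain_to_order_attained[OF p] by blast
  have "cs \<noteq> []" "last cs = p" using bcs(1) unfolding marked_chains_def by auto
  then obtain c where cs: "cs = c @ [p]" by (metis append_butlast_last_id)
  show ?thesis
  proof (cases "c = []")
    case True
    then have "b \<in> A" "b \<in> strict_below p"
      using bcs(1) cs marked_subset unfolding marked_chains_def strict_below_def by auto
    then show ?thesis using bcs(2) cs True below_le[of b] by (simp add: chain_value_def chain_to_order_def)
  next
    case False
    note butlast = marked_chains_butlast[OF bcs(1)[unfolded cs] False]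
    have "last c \<in> strict_below p"
      using butlast marked_chains_U2[OF butlast(1)] U2_subset unfolding strict_below_def by auto
    then have "chain_value mu z (b, c) \<le> ?M"
      using chain_value_le_chain_to_order[OF butlast(1), of mu z] below_le by fastforce
    then show ?thesis using bcs(2) cs by (simp add: chain_value_def)
  qed
qed

lemma chain_to_order_U2_ge:
  assumes p: "p \<in> U2"
  shows "z p + Max (chain_to_order mu z ` strict_below p) \<le> chain_to_order mu z p"
proof -
  obtain q where q: "q \<in> strict_below p" "chain_to_order mu z q = Max (chain_to_order mu z ` strict_below p)"
    using Max_in[of "chain_to_order mu z ` strict_below p"] finite_strict_below
      strict_below_nonempty[of p] p U2_subset by fastforce
  then have prec_qp: "prec q p" unfolding strict_below_def by simp
  consider "q \<in> A" | "q \<in> U2" using strict_below_U2[OF p q(1)] by blast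
  then show ?thesis
  proof cases
    case 1
    have "chain_value mu z (q, [p]) \<le> chain_to_order mu z p"
      using singleton_marked_chain[OF 1 p prec_qp] by (rule chain_value_le_chain_to_order)
    then show ?thesis using q 1 by (simp add: chain_value_def chain_to_order_def)
  next
    case 2
    obtain b cs where bcs: "(b, cs) \<in> marked_chains q" "chain_to_order mu z q = chain_value mu z (b, cs)"
      using chain_to_order_attained[OF 2] by blast
    have "chain_value mu z (b, cs @ [p]) \<le> chain_to_order mu z p"
      using marked_chains_snoc[OF bcs(1) p prec_qp] by (rule chain_value_le_chain_to_order)
    then show ?thesis using q bcs by (simp add: chain_value_def)
  qed
qed

lemma chain_to_order_U2:
  "p \<in> U2 \<Longrightarrow> chain_to_order mu z p = z p + Max (chain_to_order mu z ` strict_below p)"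
  using chain_to_order_U2_le chain_to_order_U2_ge by (metis order_antisym)

lemma chain_to_order_U2_le_marked_or_U1:
  assumes z: "z \<in> CO mu" and p: "p \<in> U2" and q: "q \<in> A \<union> U1" "prec p q"
  shows "chain_to_order mu z p \<le> lam_ext U1 mu z q"
proof -
  obtain b cs where bcs: "(b, cs) \<in> marked_chains p" "chain_to_order mu z p = chain_value mu z (b, cs)"
    using chain_to_order_attained[OF p] by blast
  then have b: "b \<in> A" and cs: "cs \<noteq> []" "set cs \<subseteq> U2" "sorted_wrt prec (b # cs)" "last cs = p"
    unfolding marked_chains_def by auto
  have "sorted_wrt prec ((b # cs) @ [q])"
    using cs b q marked_subset U1_subset U2_subset by (intro sorted_wrt_prec_snoc) auto
  then have "sum_list (map z cs) \<le> lam_ext U1 mu z q - lam_ext U1 mu z b"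
    using CO_chain_between[OF z q(1) _ cs(1,2)] b by auto
  moreover have "lam_ext U1 mu z b = real (mu b)" using b U1_subset unfolding lam_ext_def by auto
  ultimately show ?thesis using bcs(2) by (simp add: chain_value_def)
qed

lemma chain_to_order_in_order_polytope:
  assumes z: "z \<in> CO mu"
  shows "chain_to_order mu z \<in> order_polytope mu"
  unfolding order_polytope_def
proof (intro CollectI conjI ballI impI)
  fix a assume "a \<in> A" then show "chain_to_order mu z a = real (mu a)" by (simp add: chain_to_order_def)
next
  fix p q assume pq: "p \<in> P" "q \<in> P" "prec p q" "\<not> (p \<in> A \<and> q \<in> A)"
  show "chain_to_order mu z p \<le> chain_to_order mu z q"
  proof (cases "q \<in> U2")
    case True
    have "p \<in> strict_below q" using pq unfolding strict_below_def by simp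
    then have "chain_to_order mu z p \<le> Max (chain_to_order mu z ` strict_below q)"
      using finite_strict_below by simp
    then show ?thesis using chain_to_order_U2[OF True] CO_nonneg_U2[OF z True] by simp
  next
    case False
    then have q: "q \<in> A \<union> U1" using pq U_union by auto
    show ?thesis
    proof (cases "p \<in> U2")
      case True
      then show ?thesis
        using chain_to_order_U2_le_marked_or_U1[OF z True q pq(3)] chain_to_order_marked_or_U1[OF q] by simp
    next
      case False
      then have "p \<in> A \<union> U1" using pq U_union by auto
      then show ?thesis
        using q pq U1_subset CO_le_marked[OF z] CO_marked_le[OF z] CO_mono_U1[OF z]
        by (auto simp: chain_to_order_marked_or_U1 lam_ext_def)
    qed
  qed
qed

lemma order_to_chain_chain_to_order:
  assumes z: "z \<in> CO mu"
  shows "order_to_chain (chain_to_order mu z) = z"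
proof
  fix p
  show "order_to_chain (chain_to_order mu z) p = z p"
  proof (cases "p \<in> U2")
    case True
    then show ?thesis using chain_to_order_U2[OF True] unfolding order_to_chain_def by simp
  next
    case False
    then show ?thesis using CO_vanishes[OF z, of p] U_union U1_subset
      unfolding order_to_chain_def chain_to_order_def by auto
  qed
qed

lemma chain_to_order_Ints:
  assumes z: "z \<in> lattice_points (P - A)" and q: "q \<in> P"
  shows "chain_to_order mu z q \<in> \<int>"
proof (cases "q \<in> U2")
  case True
  obtain b cs where "(b, cs) \<in> marked_chains q" "chain_to_order mu z q = chain_value mu z (b, cs)"
    using chain_to_order_attained[OF True] by blast
  moreover have "sum_list (map z cs) \<in> \<int>" if "set cs \<subseteq> P - A"
    using that z unfolding lattice_points_def by (induction cs) auto
  ultimately show ?thesis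
    using U2_subset unfolding marked_chains_def chain_value_def by auto
next
  case False
  then show ?thesis using z q U_union unfolding lattice_points_def chain_to_order_def by auto
qed

section \<open>Lattice points\<close>

definition nonintegral :: "('a \<Rightarrow> real) \<Rightarrow> 'a set" where
  "nonintegral X = {p \<in> P. X p \<notin> \<int>}"

lemma order_polytope_fractional_split:
  assumes X: "X \<in> order_polytope lam" and S: "nonintegral X \<noteq> {}"
  obtains X1 X2 t where "X1 \<in> order_polytope lam" "X2 \<in> order_polytope lam"
    "comonotone_on P X X1" "comonotone_on P X X2" "0 \<le> t" "t \<le> 1"
    "\<forall>q\<in>P. X q = t * X1 q + (1 - t) * X2 q"
    "card (nonintegral X1) < card (nonintegral X)" "card (nonintegral X2) < card (nonintegral X)"
proof -
  let ?S = "nonintegral X"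
  have "finite ?S" "\<forall>p\<in>?S. X p \<notin> \<int>" using finite_P unfolding nonintegral_def by auto
  then obtain pmin pmax where pmin: "pmin \<in> ?S" and pmax: "pmax \<in> ?S"
    and "0 < frac (X pmin)" "frac (X pmax) < 1"
    and "\<forall>p\<in>?S. frac (X pmin) \<le> frac (X p) \<and> frac (X p) \<le> frac (X pmax)"
    using S frac_extremes by metis
  moreover define tmin where "tmin = frac (X pmin)"
  moreover define tmax where "tmax = frac (X pmax)"
  ultimately have tmin: "0 < tmin" and tmax: "tmax < 1"
    and fr_bounds: "\<forall>p\<in>P. X p \<notin> \<int> \<longrightarrow> tmin \<le> frac (X p) \<and> frac (X p) \<le> tmax"
    unfolding nonintegral_def by auto
  define X1 where "X1 = (\<lambda>p. if X p \<in> \<int> then X p else X p + (1 - tmax))"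
  define X2 where "X2 = (\<lambda>p. if X p \<in> \<int> then X p else X p - tmin)"
  define t where "t = tmin / (tmin + (1 - tmax))"
  have co1: "comonotone_on P X X1" unfolding X1_def
    using fr_bounds tmax by (intro comonotone_on_shift_up_fractional) auto
  have co2: "comonotone_on P X X2" unfolding X2_def
    using fr_bounds tmin by (intro comonotone_on_shift_down_fractional) auto
  have marked_Ints: "X a \<in> \<int>" if "a \<in> A" for a
    using order_polytope_marked[OF X that] by simp
  have "X1 a = real (lam a)" "X2 a = real (lam a)" if "a \<in> A" for a
    using marked_Ints[OF that] order_polytope_marked[OF X that] unfolding X1_def X2_def by auto
  then have OP: "X1 \<in> order_polytope lam" "X2 \<in> order_polytope lam"
    using comonotone_on_order_polytope[OF X] co1 co2 by auto
  have "t * (1 - tmax) - (1 - t) * tmin = 0"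
    unfolding t_def using tmin tmax by (simp add: field_simps)
  then have lin: "X q = t * X1 q + (1 - t) * X2 q" for q
    unfolding X1_def X2_def by (simp add: algebra_simps)
  have "X1 pmax \<in> \<int>" "X2 pmin \<in> \<int>"
    using pmax pmin add_one_minus_frac_Ints minus_frac_Ints
    unfolding X1_def X2_def tmin_def tmax_def nonintegral_def by auto
  then have "nonintegral X1 \<subset> ?S" "nonintegral X2 \<subset> ?S"
    using pmax pmin unfolding X1_def X2_def nonintegral_def by auto
  then have "card (nonintegral X1) < card ?S" "card (nonintegral X2) < card ?S"
    using finite_P unfolding nonintegral_def by (auto intro: psubset_card_mono)
  moreover have "0 \<le> t" "t \<le> 1" unfolding t_def using tmin tmax by auto
  ultimately show ?thesis using that OP co1 co2 lin by blast
qed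

lemma order_to_chain_in_conv_hull:
  assumes "X \<in> order_polytope lam"
  shows "order_to_chain X \<in> conv_hull_fin (CO lam \<inter> lattice_points (P - A))"
  using assms
proof (induction "card (nonintegral X)" arbitrary: X rule: less_induct)
  case less
  show ?case
  proof (cases "nonintegral X = {}")
    case True
    then have "order_to_chain X \<in> CO lam \<inter> lattice_points (P - A)"
      using order_to_chain_in_CO[OF less.prems] order_to_chain_lattice_point[of X]
      unfolding nonintegral_def by auto
    then show ?thesis using conv_hull_fin_superset finite_CO_lattice_points by blast
  next
    case False
    obtain X1 X2 t where split: "X1 \<in> order_polytope lam" "X2 \<in> order_polytope lam"
      "comonotone_on P X X1" "comonotone_on P X X2" "0 \<le> t" "t \<le> 1"
      "\<forall>q\<in>P. X q = t * X1 q + (1 - t) * X2 q"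
      "card (nonintegral X1) < card (nonintegral X)" "card (nonintegral X2) < card (nonintegral X)"
      using order_polytope_fractional_split[OF less.prems False] by blast
    have "order_to_chain X = (\<lambda>p. t * order_to_chain X1 p + (1 - t) * order_to_chain X2 p)"
      using split by (intro order_to_chain_combination) auto
    then show ?thesis using less.hyps split by (simp add: conv_hull_fin_convex)
  qed
qed

lemma CO_lattice_polytope: "lattice_polytope (P - A) (CO lam)"
  unfolding lattice_polytope_def
proof (intro exI conjI)
  let ?V = "CO lam \<inter> lattice_points (P - A)"
  show "finite ?V" by (rule finite_CO_lattice_points)
  show "?V \<subseteq> lattice_points (P - A)" by blast
  show "CO lam = conv_hull_fin ?V"
  proof
    show "CO lam \<subseteq> conv_hull_fin ?V"
      using order_to_chain_in_conv_hull[OF chain_to_order_in_order_polytope]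
        order_to_chain_chain_to_order by force
    show "conv_hull_fin ?V \<subseteq> CO lam"
    proof
      fix x assume "x \<in> conv_hull_fin ?V"
      then obtain c where c: "\<forall>v\<in>?V. 0 \<le> c v" "sum c ?V = 1" "x = (\<lambda>p. \<Sum>v\<in>?V. c v * v p)"
        unfolding conv_hull_fin_def by blast
      have "real (lam a) = (\<Sum>v\<in>?V. c v * real (lam a))" for a
        using c(2) by (simp add: sum_distrib_right[symmetric])
      then show "x \<in> CO lam" unfolding c(3) using c(1) by (intro CO_nonneg_combination) auto
    qed
  qed
qed

section \<open>Normality\<close>

lemma CO_lattice_point_split:
  assumes z: "z \<in> CO (\<lambda>a. Suc n * lam a) \<inter> lattice_points (P - A)"
  obtains y where "y \<in> CO lam \<inter> lattice_points (P - A)"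
    "(\<lambda>p. z p - y p) \<in> CO (\<lambda>a. n * lam a) \<inter> lattice_points (P - A)"
proof -
  define X where "X = chain_to_order (\<lambda>a. Suc n * lam a) z"
  define Y where "Y = (\<lambda>p. real_of_int \<lceil>X p / real (Suc n)\<rceil>)"
  define W where "W = (\<lambda>p. X p - Y p)"
  have X: "X \<in> order_polytope (\<lambda>a. Suc n * lam a)"
    unfolding X_def using z by (intro chain_to_order_in_order_polytope) auto
  have X_Ints: "\<forall>q\<in>P. X q \<in> \<int>" unfolding X_def using z chain_to_order_Ints by blast
  have co: "comonotone_on P X Y" "comonotone_on P X W"
    unfolding Y_def W_def using comonotone_on_ceiling_divide[OF X_Ints] by auto
  have "Y a = real (lam a)" "W a = real (n * lam a)" if "a \<in> A" for a
  proof -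
    have "X a = real (Suc n) * real (lam a)"
      using order_polytope_marked[OF X that] by (simp only: of_nat_mult)
    then have "X a / real (Suc n) = real (lam a)" by simp
    then show "Y a = real (lam a)" "W a = real (n * lam a)"
      using order_polytope_marked[OF X that] unfolding Y_def W_def by (simp_all add: algebra_simps)
  qed
  then have Y: "Y \<in> order_polytope lam" and W: "W \<in> order_polytope (\<lambda>a. n * lam a)"
    using comonotone_on_order_polytope[OF X] co by auto
  have "order_to_chain X = (\<lambda>p. 1 * order_to_chain Y p + 1 * order_to_chain W p)"
    using co by (intro order_to_chain_combination) (auto simp: W_def)
  then have "(\<lambda>p. z p - order_to_chain Y p) = order_to_chain W"
    using order_to_chain_chain_to_order[of z] z unfolding X_def by (auto simp: fun_eq_iff)
  moreover have "\<forall>q\<in>P. Y q \<in> \<int>" "\<forall>q\<in>P. W q \<in> \<int>" using X_Ints unfolding Y_def W_def by auto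
  ultimately show ?thesis
    using that[of "order_to_chain Y"] order_to_chain_in_CO[OF Y] order_to_chain_in_CO[OF W]
      order_to_chain_lattice_point[of Y] order_to_chain_lattice_point[of W] by simp
qed

lemma CO_lattice_points_in_minkowski_power:
  "z \<in> CO (\<lambda>a. n * lam a) \<inter> lattice_points (P - A) \<Longrightarrow>
    z \<in> minkowski_power n (CO lam \<inter> lattice_points (P - A))"
proof (induction n arbitrary: z)
  case 0
  then have "z = (\<lambda>_. 0)" using CO_zero by simp
  then show ?case using minkowski_power_0 by simp
next
  case (Suc n)
  obtain y where y: "y \<in> CO lam \<inter> lattice_points (P - A)"
    and zy: "(\<lambda>p. z p - y p) \<in> CO (\<lambda>a. n * lam a) \<inter> lattice_points (P - A)"
    using CO_lattice_point_split[OF Suc.prems] by blast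
  have "(\<lambda>p. y p + (z p - y p)) \<in> minkowski_power (Suc n) (CO lam \<inter> lattice_points (P - A))"
    using minkowski_power_SucI[OF y Suc.IH[OF zy]] .
  then show ?case by simp
qed

lemma minkowski_power_CO_lattice_points:
  assumes "z \<in> minkowski_power n (CO lam \<inter> lattice_points (P - A))"
  shows "z \<in> CO (\<lambda>a. n * lam a) \<inter> lattice_points (P - A)"
proof -
  obtain y where y: "\<forall>i<n. y i \<in> CO lam \<inter> lattice_points (P - A)" and z: "z = (\<lambda>p. \<Sum>i<n. y i p)"
    using assms unfolding minkowski_power_def by blast
  have "(\<lambda>p. \<Sum>i<n. 1 * y i p) \<in> CO (\<lambda>a. n * lam a)"
    using y by (intro CO_nonneg_combination) auto
  moreover have "z \<in> lattice_points (P - A)"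
    using y unfolding z lattice_points_def by (auto intro: Ints_sum)
  ultimately show ?thesis using z by simp
qed

lemma CO_dilate: "n \<ge> 1 \<Longrightarrow> dilate n (CO lam) = CO (\<lambda>a. n * lam a)"
proof
  show "dilate n (CO lam) \<subseteq> CO (\<lambda>a. n * lam a)"
    unfolding dilate_def by (auto intro: CO_scale)
next
  assume n: "n \<ge> 1"
  show "CO (\<lambda>a. n * lam a) \<subseteq> dilate n (CO lam)"
  proof
    fix z assume z: "z \<in> CO (\<lambda>a. n * lam a)"
    have "z = (\<lambda>p. real n * (1 / real n * z p))" using n by (auto simp: fun_eq_iff)
    moreover have "(\<lambda>p. 1 / real n * z p) \<in> CO lam" using z n by (intro CO_scale) auto
    ultimately show "z \<in> dilate n (CO lam)" unfolding dilate_def by (rule image_eqI)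
  qed
qed

lemma CO_normal: "normal_polytope (P - A) (CO lam)"
  unfolding normal_polytope_def
  using CO_lattice_polytope CO_dilate CO_lattice_points_in_minkowski_power
    minkowski_power_CO_lattice_points by blast

end

theorem corollary2p2:
  fixes P A U1 U2 :: "'a set" and prec :: "'a \<Rightarrow> 'a \<Rightarrow> bool" and lam :: "'a \<Rightarrow> nat"
  assumes "marked_poset P prec A lam"
    and "admissible_decomposition P prec A U1 U2"
  shows "lattice_polytope (P - A) (marked_chain_order_polytope P prec A lam U1 U2)
    \<and> normal_polytope (P - A) (marked_chain_order_polytope P prec A lam U1 U2)"
proof -
  interpret admissible_marked_poset P prec A U1 U2
    using assms by (rule admissible_marked_posetI)
  show ?thesis using CO_lattice_polytope CO_normal by blast
qed

end
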